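(* Let $\alpha\in\mathbb T$ and $\varepsilon>0$. The set $S=\{n\in\mathbb N:\|n\alpha\|>\varepsilon\}$ is not $2$-large.
   Context: $\|t\|$ is the distance from $t$ to the nearest integer. For $r\ge2$, a set $R\subset\mathbb N$ is $r$-large if for every coloring of $\mathbb N$ with $r$ colors and every length $L$ there is a monochromatic arithmetic progression $a,a+n,\dots,a+(L-1)n$ with $n\in R$. *)

theory Defs
  imports Complex_Main
begin

definition dist_nint :: "real \<Rightarrow> real" where
  "dist_nint t = min (frac t) (1 - frac t)"

text \<open>Natural numbers are the positive integers {1,2,...}.\<close>
definition r_large :: "nat \<Rightarrow> nat set \<Rightarrow> bool" where
  "r_large r R \<longleftrightarrow>
     (\<forall>c :: nat \<Rightarrow> nat. (\<forall>x\<ge>1. c x < r) \<longrightarrow>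
        (\<forall>L::nat. \<exists>a\<ge>1. \<exists>n\<in>R. n \<ge> 1 \<and> (\<forall>i<L. c (a + i * n) = c a)))"

end

theory Submission
  imports Defs
begin

(* Colour x by which half of the circle x\<alpha> lies in: colour 0 if
   frac (x\<alpha>) < 1/2, colour 1 otherwise.  Suppose a, a+n, ..., a+(L-1)n is
   monochromatic with \<parallel>n\<alpha>\<parallel> > \<epsilon>.  Then the points frac (a\<alpha> + i n\<alpha>), i < L, all lie
   in one half-open arc [s, s+1/2) of length 1/2.  Consecutive points differ by
   n\<alpha> minus an integer of absolute value < 1/2, and two such integer shifts differ by
   less than 1, so the shift is the same integer m at every step: the points form a
   genuine real progression with step d = n\<alpha> - m, where |d| \<ge> \<parallel>n\<alpha>\<parallel>.  Its total
   length (L-1)|d| is therefore < 1/2, i.e. (L-1)\<parallel>n\<alpha>\<parallel> < 1/2, which fails once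
   L is large compared with 1/\<epsilon>.
   The file proves, in this order: the defining minimality of dist_nint, the
   linearity of a progression confined to a short arc, the resulting length bound,
   the fact that the half-circle colouring turns monochromatic progressions into
   progressions confined to a short arc, and finally the theorem. *)

lemma dist_nint_le: "dist_nint \<theta> \<le> \<bar>\<theta> - of_int k\<bar>"
proof -
  have f: "frac \<theta> = \<theta> - of_int \<lfloor>\<theta>\<rfloor>" by (simp add: frac_def)
  show ?thesis
  proof (cases "k \<le> \<lfloor>\<theta>\<rfloor>")
    case True
    then have "of_int k \<le> (of_int \<lfloor>\<theta>\<rfloor>::real)" by simp
    then show ?thesis unfolding dist_nint_def f by linarith
  next
    case False
    then have "of_int k \<ge> (of_int \<lfloor>\<theta>\<rfloor>::real) + 1" by simp
    then show ?thesis unfolding dist_nint_def f by linarith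
  qed
qed

lemma frac_add_step:
  "frac (y + \<theta>) - frac y = \<theta> - of_int (\<lfloor>y + \<theta>\<rfloor> - \<lfloor>y\<rfloor>)"
  by (simp add: frac_def)

lemma frac_progression_in_short_arc:
  fixes t \<theta> s :: real and L :: nat
  assumes arc: "\<And>i. i < L \<Longrightarrow> s \<le> frac (t + real i * \<theta>) \<and> frac (t + real i * \<theta>) < s + 1/2"
  obtains m :: int where "\<And>i. i < L \<Longrightarrow> frac (t + real i * \<theta>) = frac t + real i * (\<theta> - of_int m)"
proof -
  define x where "x i = frac (t + real i * \<theta>)" for i :: nat
  define m where "m i = \<lfloor>t + real (Suc i) * \<theta>\<rfloor> - \<lfloor>t + real i * \<theta>\<rfloor>" for i :: nat
  have step: "x (Suc i) - x i = \<theta> - of_int (m i)" for i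
    using frac_add_step[of "t + real i * \<theta>" \<theta>]
    unfolding x_def m_def by (simp add: algebra_simps)
  have small: "\<bar>\<theta> - of_int (m i)\<bar> < 1/2" if "Suc i < L" for i
  proof -
    have "s \<le> x (Suc i)" "x (Suc i) < s + 1/2" "s \<le> x i" "x i < s + 1/2"
      using arc[of "Suc i"] arc[of i] that unfolding x_def by auto
    then show ?thesis using step[of i] by linarith
  qed
  have same: "m i = m 0" if "Suc i < L" for i
  proof -
    have "\<bar>of_int (m i) - of_int (m 0)\<bar> < (1::real)"
      using small[OF that] small[of 0] that by linarith
    then show ?thesis by linarith
  qed
  have "x i = x 0 + real i * (\<theta> - of_int (m 0))" if "i < L" for i
    using that
  proof (induction i)
    case 0
    then show ?case by simp
  next
    case (Suc i)
    then show ?case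
      using step[of i] same[of i] by (simp add: algebra_simps)
  qed
  then show ?thesis
    using that[of "m 0"] unfolding x_def by simp
qed

lemma short_arc_length_bound:
  fixes t \<theta> s :: real and L :: nat
  assumes arc: "\<And>i. i < L \<Longrightarrow> s \<le> frac (t + real i * \<theta>) \<and> frac (t + real i * \<theta>) < s + 1/2"
  shows "real (L - 1) * dist_nint \<theta> < 1/2"
proof (cases "L = 0")
  case True
  then show ?thesis by simp
next
  case False
  obtain m :: int
    where lin: "\<And>i. i < L \<Longrightarrow> frac (t + real i * \<theta>) = frac t + real i * (\<theta> - of_int m)"
    using frac_progression_in_short_arc[OF arc] by blast
  have "\<bar>real (L - 1) * (\<theta> - of_int m)\<bar> < 1/2"
    using lin[of "L - 1"] arc[of "L - 1"] arc[of 0] False by auto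
  moreover have "real (L - 1) * dist_nint \<theta> \<le> real (L - 1) * \<bar>\<theta> - of_int m\<bar>"
    by (intro mult_left_mono dist_nint_le) auto
  ultimately show ?thesis by (simp add: abs_mult)
qed

definition half_circle_colouring :: "real \<Rightarrow> nat \<Rightarrow> nat" where
  "half_circle_colouring \<alpha> x = (if frac (real x * \<alpha>) < 1/2 then 0 else 1)"

lemma monochromatic_in_short_arc:
  assumes mono: "\<And>i. i < L \<Longrightarrow> half_circle_colouring \<alpha> (a + i * n) = half_circle_colouring \<alpha> a"
  obtains s :: real where
    "\<And>i. i < L \<Longrightarrow> s \<le> frac (real a * \<alpha> + real i * (real n * \<alpha>))
                  \<and> frac (real a * \<alpha> + real i * (real n * \<alpha>)) < s + 1/2"
proof -
  define s :: real where "s = (if half_circle_colouring \<alpha> a = 0 then 0 else 1/2)"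
  have "s \<le> frac (real a * \<alpha> + real i * (real n * \<alpha>))
        \<and> frac (real a * \<alpha> + real i * (real n * \<alpha>)) < s + 1/2" if "i < L" for i
  proof -
    have "real (a + i * n) * \<alpha> = real a * \<alpha> + real i * (real n * \<alpha>)"
      by (simp add: algebra_simps)
    moreover have "0 \<le> frac y" "frac y < 1" for y :: real
      by (auto simp: frac_lt_1)
    ultimately show ?thesis
      using mono[OF that] unfolding s_def half_circle_colouring_def
      by (auto split: if_splits)
  qed
  then show ?thesis using that by blast
qed

theorem mainTheorem17:
  fixes \<alpha> \<epsilon> :: real
  assumes "\<epsilon> > 0"
  shows "\<not> r_large 2 {n::nat. n \<ge> 1 \<and> dist_nint (real n * \<alpha>) > \<epsilon>}"
proof
  assume "r_large 2 {n::nat. n \<ge> 1 \<and> dist_nint (real n * \<alpha>) > \<epsilon>}"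
  moreover have "\<forall>x\<ge>1. half_circle_colouring \<alpha> x < 2"
    by (simp add: half_circle_colouring_def)
  moreover obtain N :: nat where N: "1 / \<epsilon> < real N"
    using reals_Archimedean2 by blast
  ultimately obtain a n where far: "dist_nint (real n * \<alpha>) > \<epsilon>"
    and mono: "\<forall>i<N + 1. half_circle_colouring \<alpha> (a + i * n) = half_circle_colouring \<alpha> a"
    unfolding r_large_def by blast
  obtain s where "\<And>i. i < N + 1 \<Longrightarrow> s \<le> frac (real a * \<alpha> + real i * (real n * \<alpha>))
                  \<and> frac (real a * \<alpha> + real i * (real n * \<alpha>)) < s + 1/2"
    using monochromatic_in_short_arc mono by blast
  from short_arc_length_bound[of "N + 1", OF this]
  have "real N * dist_nint (real n * \<alpha>) < 1/2" by simp
  moreover have "1 < real N * \<epsilon>"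
    using N \<open>\<epsilon> > 0\<close> by (simp add: field_simps)
  moreover have "real N * \<epsilon> \<le> real N * dist_nint (real n * \<alpha>)"
    using far by (intro mult_left_mono) auto
  ultimately show False by linarith
qed

end
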